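(* Let $\mu$ be a probability measure on $\mathbb{C}$, $\{a_n\}_{n\ge1}$ a $\mu$-distributed sequence of complex numbers, $\sigma_n\ge0$ real numbers with $\sigma_n\downarrow0$, and $X_1,X_2,\dots$ i.i.d. complex random variables. Then the sequence $\{a_n+\sigma_nX_n\}_{n\ge1}$ is $\mu$-distributed almost surely.
   Context: A sequence $\{a_n\}$ of complex numbers is $\mu$-distributed if $\frac1n\sum_{k=1}^n\delta_{a_k}$ converges weakly to $\mu$, i.e. $\frac1n\sum_{k=1}^n f(a_k)\to\int f\,d\mu$ for all $f\in C_c^\infty(\mathbb{C})$. *)

theory Defs
  imports "HOL-Probability.Probability"
begin

text \<open>C-infinity on C viewed as R^2: all iterated (real) directional derivatives exist everywhere.\<close>
coinductive smooth_fun :: "(complex \<Rightarrow> complex) \<Rightarrow> bool" where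
  "(\<forall>x. f differentiable (at x)) \<Longrightarrow>
   (\<forall>v. smooth_fun (\<lambda>x. frechet_derivative f (at x) v)) \<Longrightarrow> smooth_fun f"

definition test_fun :: "(complex \<Rightarrow> complex) \<Rightarrow> bool" where
  "test_fun f \<longleftrightarrow> smooth_fun f \<and> compact (closure {x. f x \<noteq> 0})"

definition mu_distributed :: "complex measure \<Rightarrow> (nat \<Rightarrow> complex) \<Rightarrow> bool" where
  "mu_distributed \<mu> a \<longleftrightarrow>
     (\<forall>f. test_fun f \<longrightarrow>
        (\<lambda>n. (\<Sum>k=1..n. f (a k)) / of_nat n) \<longlonglongrightarrow> integral\<^sup>L \<mu> f)"

end

theory Submission
  imports Defs
begin

text \<open>
  A test function f is bounded and uniformly continuous, so the averages of f(a_k + b_k) and of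
  f(a_k) have the same limit whenever b_k converges to 0 in density: for every d > 0 the indices
  with |b_k| \<ge> d have density 0. For b_k = \<sigma>_k X_k the indicators of these events are
  independent with means P(|\<sigma>_k X_1| \<ge> d) \<rightarrow> 0. By Hoeffding's inequality their n-th average
  exceeds the average of the means by \<eta> with probability at most exp(-2 \<eta>^2 n), so by
  Borel-Cantelli the averages tend to 0 almost surely.
\<close>

text \<open>Summation starts at 1 as in mu_distributed; the value at 0 is ignored.\<close>
definition cesaro_mean :: "(nat \<Rightarrow> 'a::field_char_0) \<Rightarrow> nat \<Rightarrow> 'a" where
  "cesaro_mean u n = (\<Sum>k=1..n. u k) / of_nat n"

definition statistically_null :: "(nat \<Rightarrow> 'a::real_normed_vector) \<Rightarrow> bool" where
  "statistically_null b \<longleftrightarrow>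
     (\<forall>d>0. cesaro_mean (\<lambda>k. if d \<le> norm (b k) then 1 else 0 :: real) \<longlonglongrightarrow> 0)"

lemma cesaro_mean_nonneg: "(\<And>k. k \<ge> 1 \<Longrightarrow> 0 \<le> u k) \<Longrightarrow> 0 \<le> cesaro_mean u n"
  for u :: "nat \<Rightarrow> real"
  unfolding cesaro_mean_def by (intro divide_nonneg_nonneg sum_nonneg) auto

lemma cesaro_mean_mono: "(\<And>k. u k \<le> v k) \<Longrightarrow> cesaro_mean u n \<le> cesaro_mean v n"
  for u v :: "nat \<Rightarrow> real"
  unfolding cesaro_mean_def by (intro divide_right_mono sum_mono) auto

lemma norm_cesaro_mean_le:
  fixes u :: "nat \<Rightarrow> 'a::real_normed_field"
  assumes "\<And>k. norm (u k) \<le> v k"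
  shows "norm (cesaro_mean u n) \<le> cesaro_mean v n"
proof -
  have "norm (\<Sum>k=1..n. u k) \<le> (\<Sum>k=1..n. v k)"
    using norm_sum order_trans sum_mono assms by (metis (no_types, lifting))
  then show ?thesis
    unfolding cesaro_mean_def by (simp add: norm_divide divide_right_mono)
qed

lemma cesaro_mean_affine:
  "n \<ge> 1 \<Longrightarrow> cesaro_mean (\<lambda>k. c + C * u k) n = c + C * cesaro_mean u n"
  for u :: "nat \<Rightarrow> real"
  unfolding cesaro_mean_def by (simp add: sum.distrib sum_distrib_left add_divide_distrib)

lemma cesaro_mean_tendsto_0:
  fixes p :: "nat \<Rightarrow> 'a::real_normed_field"
  assumes "p \<longlonglongrightarrow> 0"
  shows "cesaro_mean p \<longlonglongrightarrow> 0"
proof (rule LIMSEQ_I)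
  fix r :: real assume r: "r > 0"
  obtain K where K: "\<And>k. k \<ge> K \<Longrightarrow> norm (p k) < r/2"
    using LIMSEQ_D[OF assms, of "r/2"] r by auto
  define C where "C = (\<Sum>k=1..K. norm (p k))"
  obtain N :: nat where N: "real N > 2 * C / r" using reals_Archimedean2 by blast
  have "norm (cesaro_mean p n) < r" if n: "n \<ge> max (Suc K) N" for n
  proof -
    have "{1..n} = {1..K} \<union> {Suc K..n}" using n by auto
    then have "(\<Sum>k=1..n. norm (p k)) = C + (\<Sum>k=Suc K..n. norm (p k))"
      unfolding C_def by (simp add: sum.union_disjoint)
    also have "\<dots> \<le> C + (\<Sum>k=Suc K..n. r/2)"
      using K by (intro add_left_mono sum_mono less_imp_le) auto
    also have "\<dots> \<le> C + real n * (r/2)"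
      using r by simp
    also have "\<dots> < r * real n"
    proof -
      have "2 * C / r < real n" using N n by linarith
      then have "2 * C < real n * r" by (simp add: pos_divide_less_eq[OF r])
      then show ?thesis by (simp add: field_simps)
    qed
    finally have "(\<Sum>k=1..n. norm (p k)) / real n < r"
      using n by (simp add: pos_divide_less_eq)
    moreover have "norm (cesaro_mean p n) \<le> (\<Sum>k=1..n. norm (p k)) / real n"
      using norm_cesaro_mean_le[of p "\<lambda>k. norm (p k)" n] by (simp add: cesaro_mean_def)
    ultimately show ?thesis by linarith
  qed
  then show "\<exists>no. \<forall>n\<ge>no. norm (cesaro_mean p n - 0) < r"
    by (intro exI[of _ "max (Suc K) N"]) auto
qed

lemma tendsto_0_squeeze_inverse_Suc:
  fixes u v :: "nat \<Rightarrow> real"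
  assumes "\<And>n. 0 \<le> u n" "v \<longlonglongrightarrow> 0"
    and "\<And>j. eventually (\<lambda>n. u n < v n + 1 / real (Suc j)) sequentially"
  shows "u \<longlonglongrightarrow> 0"
proof (rule LIMSEQ_I)
  fix r :: real assume r: "r > 0"
  obtain j :: nat where j: "1 / real (Suc j) < r/2"
    using reals_Archimedean[of "r/2"] r by (auto simp: inverse_eq_divide)
  have "eventually (\<lambda>n. \<bar>v n\<bar> < r/2) sequentially"
    using tendstoD[OF assms(2), of "r/2"] r by (simp add: dist_real_def)
  with assms(3)[of j] have "eventually (\<lambda>n. norm (u n - 0) < r) sequentially"
    by eventually_elim (use assms(1) j in auto)
  then show "\<exists>no. \<forall>n\<ge>no. norm (u n - 0) < r" by (simp add: eventually_sequentially)
qed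

lemma compact_support_bounded:
  fixes f :: "'a::topological_space \<Rightarrow> 'b::real_normed_vector"
  assumes "continuous_on UNIV f" "compact K" "\<And>x. x \<notin> K \<Longrightarrow> f x = 0"
  shows "bounded (range f)"
proof -
  have "range f \<subseteq> insert 0 (f ` K)" using assms(3) by auto
  moreover have "bounded (f ` K)"
    using continuous_on_subset[OF assms(1) subset_UNIV] assms(2)
    by (intro compact_imp_bounded compact_continuous_image)
  ultimately show ?thesis by (meson bounded_insert bounded_subset)
qed

lemma compact_support_uniformly_continuous:
  fixes f :: "'a::heine_borel \<Rightarrow> 'b::real_normed_vector"
  assumes "continuous_on UNIV f" "compact K" "\<And>x. x \<notin> K \<Longrightarrow> f x = 0"
  shows "uniformly_continuous_on UNIV f"
  unfolding uniformly_continuous_on_def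
proof (intro allI impI)
  fix e :: real assume e: "e > 0"
  obtain c R where R: "K \<subseteq> cball c R"
    using compact_imp_bounded[OF assms(2)] bounded_subset_cball by blast
  have "uniformly_continuous_on (cball c (R+1)) f"
    by (intro compact_uniformly_continuous continuous_on_subset[OF assms(1)]) auto
  then obtain d where d: "d > 0"
    "\<And>x y. x \<in> cball c (R+1) \<Longrightarrow> y \<in> cball c (R+1) \<Longrightarrow> dist y x < d \<Longrightarrow> dist (f y) (f x) < e"
    unfolding uniformly_continuous_on_def using e by metis
  have "dist (f y) (f x) < e" if xy: "dist y x < min d 1" for x y
  proof (cases "x \<in> K \<or> y \<in> K")
    case True
    have "dist c y \<le> dist c x + dist x y" "dist c x \<le> dist c y + dist y x"
      by (rule dist_triangle)+
    with True R xy have "x \<in> cball c (R+1) \<and> y \<in> cball c (R+1)"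
      by (auto simp: dist_commute)
    then show ?thesis using d xy by auto
  next
    case False
    then show ?thesis using assms(3) e by auto
  qed
  then show "\<exists>d>0. \<forall>x\<in>UNIV. \<forall>y\<in>UNIV. dist y x < d \<longrightarrow> dist (f y) (f x) < e"
    using d(1) by (intro exI[of _ "min d 1"]) auto
qed

lemma test_fun_continuous:
  assumes "test_fun f"
  shows "continuous_on UNIV f"
proof -
  have "smooth_fun f" using assms unfolding test_fun_def by simp
  then have "\<forall>x. f differentiable (at x)" by (cases rule: smooth_fun.cases) auto
  then show ?thesis
    by (simp add: continuous_at_imp_continuous_on differentiable_imp_continuous_within)
qed

lemma test_fun_compact_support:
  assumes "test_fun f"
  obtains K where "compact K" "\<And>x. x \<notin> K \<Longrightarrow> f x = 0"
proof (rule that)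
  show "compact (closure {x. f x \<noteq> 0})" using assms unfolding test_fun_def by simp
  show "f x = 0" if "x \<notin> closure {x. f x \<noteq> 0}" for x
    using that closure_subset[of "{x. f x \<noteq> 0}"] by auto
qed

lemma mu_distributed_cesaro_mean:
  "mu_distributed \<mu> a \<longleftrightarrow>
     (\<forall>f. test_fun f \<longrightarrow> cesaro_mean (\<lambda>k. f (a k)) \<longlonglongrightarrow> integral\<^sup>L \<mu> f)"
  by (simp add: mu_distributed_def cesaro_mean_def[abs_def])

lemma norm_diff_le_if_bounded_uniformly_close:
  fixes f :: "'a::real_normed_vector \<Rightarrow> 'b::real_normed_vector"
  assumes "\<And>x. norm (f x) \<le> B" "d > 0" "\<And>x y. dist y x < d \<Longrightarrow> dist (f y) (f x) < e"
  shows "norm (f (x + h) - f x) \<le> e + 2 * B * (if d \<le> norm h then 1 else 0)"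
proof (cases "d \<le> norm h")
  case True
  have "norm (f (x + h) - f x) \<le> norm (f (x + h)) + norm (f x)"
    by (rule norm_triangle_ineq4)
  also have "\<dots> \<le> 2 * B" using assms(1)[of "x + h"] assms(1)[of x] by simp
  finally show ?thesis using True assms(2) assms(3)[of x x] by simp
next
  case False
  then have "dist (f (x + h)) (f x) < e" by (intro assms(3)) (simp add: dist_norm)
  then show ?thesis using False by (simp add: dist_norm)
qed

lemma cesaro_mean_perturbation_tendsto_0:
  fixes f :: "'a::real_normed_vector \<Rightarrow> 'b::real_normed_field"
  assumes "uniformly_continuous_on UNIV f" "bounded (range f)" "statistically_null b"
  shows "cesaro_mean (\<lambda>k. f (a k + b k) - f (a k)) \<longlonglongrightarrow> 0"
proof (rule LIMSEQ_I)
  fix r :: real assume r: "r > 0"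
  obtain B where B: "B > 0" "\<And>x. norm (f x) \<le> B"
    using assms(2) unfolding bounded_pos by auto
  obtain d where d: "d > 0" "\<And>x y. dist y x < d \<Longrightarrow> dist (f y) (f x) < r/2"
    using assms(1) r unfolding uniformly_continuous_on_def by (metis UNIV_I half_gt_zero)
  define I where "I = cesaro_mean (\<lambda>k. if d \<le> norm (b k) then 1 else 0 :: real)"
  have "I \<longlonglongrightarrow> 0" using assms(3) d(1) unfolding I_def statistically_null_def by blast
  then have "eventually (\<lambda>n. I n < r / (4 * B)) sequentially"
    using r B(1) by (intro order_tendstoD(2)) auto
  then obtain N where N: "\<And>n. n \<ge> N \<Longrightarrow> I n < r / (4 * B)"
    unfolding eventually_sequentially by blast
  have pointwise: "norm (f (a k + b k) - f (a k)) \<le> r/2 + 2 * B * (if d \<le> norm (b k) then 1 else 0)"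
    for k
    using B(2) d by (rule norm_diff_le_if_bounded_uniformly_close)
  have "norm (cesaro_mean (\<lambda>k. f (a k + b k) - f (a k)) n) < r" if n: "n \<ge> max N 1" for n
  proof -
    have "norm (cesaro_mean (\<lambda>k. f (a k + b k) - f (a k)) n)
          \<le> cesaro_mean (\<lambda>k. r/2 + 2 * B * (if d \<le> norm (b k) then 1 else 0)) n"
      by (rule norm_cesaro_mean_le[OF pointwise])
    also have "\<dots> = r/2 + 2 * B * I n"
      using n unfolding I_def by (intro cesaro_mean_affine) auto
    also have "\<dots> < r"
    proof -
      have "2 * B * I n < 2 * B * (r / (4 * B))"
        using N[of n] n B(1) by (intro mult_strict_left_mono) auto
      also have "\<dots> = r/2" using B(1) by simp
      finally show ?thesis by simp
    qed
    finally show ?thesis .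
  qed
  then show "\<exists>no. \<forall>n\<ge>no. norm (cesaro_mean (\<lambda>k. f (a k + b k) - f (a k)) n - 0) < r"
    by (intro exI[of _ "max N 1"]) auto
qed

lemma mu_distributed_add:
  assumes "mu_distributed \<mu> a" "statistically_null b"
  shows "mu_distributed \<mu> (\<lambda>n. a n + b n)"
  unfolding mu_distributed_cesaro_mean
proof (intro allI impI)
  fix f assume f: "test_fun f"
  obtain K where K: "compact K" "\<And>x. x \<notin> K \<Longrightarrow> f x = 0"
    using test_fun_compact_support[OF f] by metis
  have "cesaro_mean (\<lambda>k. f (a k + b k) - f (a k)) \<longlonglongrightarrow> 0"
    using test_fun_continuous[OF f] K assms(2)
    by (intro cesaro_mean_perturbation_tendsto_0 compact_support_uniformly_continuous
        compact_support_bounded)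
  moreover have "cesaro_mean (\<lambda>k. f (a k)) \<longlonglongrightarrow> integral\<^sup>L \<mu> f"
    using assms(1) f unfolding mu_distributed_cesaro_mean by blast
  ultimately have "(\<lambda>n. cesaro_mean (\<lambda>k. f (a k + b k) - f (a k)) n + cesaro_mean (\<lambda>k. f (a k)) n)
      \<longlonglongrightarrow> 0 + integral\<^sup>L \<mu> f"
    by (rule tendsto_add)
  then show "cesaro_mean (\<lambda>k. f (a k + b k)) \<longlonglongrightarrow> integral\<^sup>L \<mu> f"
    by (simp add: cesaro_mean_def[abs_def] sum_subtractf diff_divide_distrib)
qed

lemma statistically_nullI_inverse_Suc:
  assumes "\<And>j. cesaro_mean (\<lambda>k. if 1 / real (Suc j) \<le> norm (b k) then 1 else 0 :: real)
                \<longlonglongrightarrow> 0"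
  shows "statistically_null b"
  unfolding statistically_null_def
proof (intro allI impI)
  fix d :: real assume "d > 0"
  then obtain j :: nat where j: "1 / real (Suc j) < d"
    using reals_Archimedean by (auto simp: inverse_eq_divide)
  show "cesaro_mean (\<lambda>k. if d \<le> norm (b k) then 1 else 0 :: real) \<longlonglongrightarrow> 0"
  proof (rule tendsto_sandwich[OF _ _ tendsto_const assms[of j]])
    show "eventually (\<lambda>n. 0 \<le> cesaro_mean (\<lambda>k. if d \<le> norm (b k) then 1 else 0 :: real) n)
      sequentially"
      by (intro always_eventually allI cesaro_mean_nonneg) auto
    show "eventually (\<lambda>n. cesaro_mean (\<lambda>k. if d \<le> norm (b k) then 1 else 0 :: real) n
      \<le> cesaro_mean (\<lambda>k. if 1 / real (Suc j) \<le> norm (b k) then 1 else 0 :: real) n) sequentially"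
      using j by (intro always_eventually allI cesaro_mean_mono) auto
  qed
qed

lemma (in prob_space) prob_partial_sum_ge_le_exp:
  fixes Y :: "nat \<Rightarrow> 'a \<Rightarrow> real"
  assumes indep: "indep_vars (\<lambda>_. borel) Y {1..}"
    and bounds: "\<And>k x. k \<ge> 1 \<Longrightarrow> x \<in> space M \<Longrightarrow> Y k x \<in> {0..1}"
    and "\<eta> \<ge> 0"
  shows "prob {x\<in>space M. (\<Sum>k=1..n. expectation (Y k)) + real n * \<eta> \<le> (\<Sum>k=1..n. Y k x)}
           \<le> exp (- (2 * \<eta>\<^sup>2)) ^ n"
proof (cases "n = 0")
  case False
  have "Hoeffding_ineq M {1..n} Y (\<lambda>_. 0) (\<lambda>_. 1)"
    unfolding Hoeffding_ineq_def indep_interval_bounded_random_variables_def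
      indep_interval_bounded_random_variables_axioms_def
    using prob_space_axioms indep_vars_subset[OF indep, of "{1..n}"] bounds by auto
  from Hoeffding_ineq.Hoeffding_ineq_ge[OF this, of "real n * \<eta>"] False \<open>\<eta> \<ge> 0\<close>
  have "prob {x\<in>space M. (\<Sum>k=1..n. expectation (Y k)) + real n * \<eta> \<le> (\<Sum>k=1..n. Y k x)}
          \<le> exp (- 2 * (real n * \<eta>)\<^sup>2 / real n)"
    by simp
  also have "\<dots> = exp (- (2 * \<eta>\<^sup>2)) ^ n"
    using False by (simp add: power2_eq_square exp_of_nat_mult[symmetric] field_simps)
  finally show ?thesis .
qed simp

lemma (in prob_space) AE_eventually_cesaro_mean_less:
  fixes Y :: "nat \<Rightarrow> 'a \<Rightarrow> real"
  assumes indep: "indep_vars (\<lambda>_. borel) Y {1..}"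
    and bounds: "\<And>k x. k \<ge> 1 \<Longrightarrow> x \<in> space M \<Longrightarrow> Y k x \<in> {0..1}"
    and "\<eta> > 0"
  shows "AE x in M. eventually (\<lambda>n.
           cesaro_mean (\<lambda>k. Y k x) n < cesaro_mean (\<lambda>k. expectation (Y k)) n + \<eta>) sequentially"
proof -
  define A where "A n = {x\<in>space M. (\<Sum>k=1..n. expectation (Y k)) + real n * \<eta> \<le> (\<Sum>k=1..n. Y k x)}"
    for n
  have [measurable]: "Y k \<in> borel_measurable M" if "k \<ge> 1" for k
    using indep that unfolding indep_vars_def by auto
  have A_events: "A n \<in> events" for n
    unfolding A_def by measurable
  have A_prob: "prob (A n) \<le> exp (- (2 * \<eta>\<^sup>2)) ^ n" for n
    unfolding A_def using indep bounds \<open>\<eta> > 0\<close> by (intro prob_partial_sum_ge_le_exp) auto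
  have "summable (\<lambda>n. exp (- (2 * \<eta>\<^sup>2)) ^ n)"
    using \<open>\<eta> > 0\<close> by (intro summable_geometric) simp
  then have "summable (\<lambda>n. prob (A n))"
    by (rule summable_comparison_test[rotated]) (use A_prob in auto)
  then have "AE x in M. eventually (\<lambda>n. x \<in> space M - A n) sequentially"
    using A_events by (intro borel_cantelli_AE1) (auto simp: less_top[symmetric])
  then show ?thesis
  proof eventually_elim
    case (elim x)
    then show ?case
      using eventually_gt_at_top[of 0]
    proof eventually_elim
      case (elim n)
      then have "(\<Sum>k=1..n. Y k x) < (\<Sum>k=1..n. expectation (Y k)) + real n * \<eta>"
        unfolding A_def by auto
      then show ?case
        using elim by (simp add: cesaro_mean_def pos_divide_less_eq field_simps)
    qed
  qed
qed

lemma (in prob_space) AE_cesaro_mean_tendsto_0: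
  fixes Y :: "nat \<Rightarrow> 'a \<Rightarrow> real"
  assumes "indep_vars (\<lambda>_. borel) Y {1..}"
    and "\<And>k x. k \<ge> 1 \<Longrightarrow> x \<in> space M \<Longrightarrow> Y k x \<in> {0..1}"
    and "(\<lambda>k. expectation (Y k)) \<longlonglongrightarrow> 0"
  shows "AE x in M. cesaro_mean (\<lambda>k. Y k x) \<longlonglongrightarrow> 0"
proof -
  have "AE x in M. \<forall>j. eventually (\<lambda>n. cesaro_mean (\<lambda>k. Y k x) n
          < cesaro_mean (\<lambda>k. expectation (Y k)) n + 1 / real (Suc j)) sequentially"
    unfolding AE_all_countable using assms(1,2) by (intro allI AE_eventually_cesaro_mean_less) auto
  with AE_space show ?thesis
  proof eventually_elim
    case (elim x)
    show ?case
    proof (rule tendsto_0_squeeze_inverse_Suc)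
      show "0 \<le> cesaro_mean (\<lambda>k. Y k x) n" for n
        using assms(2) elim by (intro cesaro_mean_nonneg) auto
    qed (use elim cesaro_mean_tendsto_0[OF assms(3)] in auto)
  qed
qed

lemma (in prob_space) expectation_indicator_scaled_tendsto_0:
  fixes Z :: "'a \<Rightarrow> 'b::real_normed_vector"
  assumes [measurable]: "Z \<in> borel_measurable M" and "\<sigma> \<longlonglongrightarrow> 0" "d > 0"
  shows "(\<lambda>k. expectation (\<lambda>x. if d \<le> \<bar>\<sigma> k\<bar> * norm (Z x) then 1 else 0 :: real)) \<longlonglongrightarrow> 0"
proof -
  have "(\<lambda>k. if d \<le> \<bar>\<sigma> k\<bar> * norm z then 1 else 0 :: real) \<longlonglongrightarrow> 0" for z
  proof -
    have "(\<lambda>k. \<bar>\<sigma> k\<bar> * norm z) \<longlonglongrightarrow> 0"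
      using tendsto_rabs_zero[OF assms(2)] by (rule tendsto_mult_left_zero)
    then have "eventually (\<lambda>k. \<bar>\<sigma> k\<bar> * norm z < d) sequentially"
      using \<open>d > 0\<close> by (rule order_tendstoD(2))
    then show ?thesis
      by (rule tendsto_eventually[OF eventually_mono]) simp
  qed
  then have "(\<lambda>k. expectation (\<lambda>x. if d \<le> \<bar>\<sigma> k\<bar> * norm (Z x) then 1 else 0 :: real))
      \<longlonglongrightarrow> expectation (\<lambda>x. 0)"
    by (intro integral_dominated_convergence[where w="\<lambda>_. 1"]) auto
  then show ?thesis by simp
qed

lemma (in prob_space) AE_statistically_null_scaled_iid:
  fixes X :: "nat \<Rightarrow> 'a \<Rightarrow> 'b::real_normed_vector" and \<sigma> :: "nat \<Rightarrow> real"
  assumes "\<sigma> \<longlonglongrightarrow> 0" and indep: "indep_vars (\<lambda>_. borel) X {1..}"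
    and distr: "\<And>k. k \<ge> 1 \<Longrightarrow> distr M borel (X k) = distr M borel (X 1)"
  shows "AE x in M. statistically_null (\<lambda>k. \<sigma> k *\<^sub>R X k x)"
proof -
  have X_measurable [measurable]: "X k \<in> borel_measurable M" if "k \<ge> 1" for k
    using indep that unfolding indep_vars_def by auto
  have "AE x in M. cesaro_mean (\<lambda>k. if d \<le> norm (\<sigma> k *\<^sub>R X k x) then 1 else 0 :: real)
          \<longlonglongrightarrow> 0" if "d > 0" for d
  proof -
    define g where "g k z = (if d \<le> \<bar>\<sigma> k\<bar> * norm z then 1 else 0 :: real)" for k and z :: 'b
    have g_measurable [measurable]: "g k \<in> borel_measurable borel" for k
      unfolding g_def by measurable
    have "(\<lambda>k. expectation (\<lambda>x. g k (X 1 x))) \<longlonglongrightarrow> 0"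
      unfolding g_def using assms(1) \<open>d > 0\<close> by (intro expectation_indicator_scaled_tendsto_0) auto
    moreover have "eventually (\<lambda>k. expectation (\<lambda>x. g k (X k x)) = expectation (\<lambda>x. g k (X 1 x)))
        sequentially"
      using eventually_ge_at_top[of 1]
    proof eventually_elim
      case (elim k)
      then show ?case
        using integral_distr[of "X k" M borel "g k"] integral_distr[of "X 1" M borel "g k"]
          distr[OF elim] by simp
    qed
    ultimately have "(\<lambda>k. expectation (\<lambda>x. g k (X k x))) \<longlonglongrightarrow> 0"
      using tendsto_cong by force
    moreover have "indep_vars (\<lambda>_. borel) (\<lambda>k x. g k (X k x)) {1..}"
      using indep by (rule indep_vars_compose2) simp
    ultimately have "AE x in M. cesaro_mean (\<lambda>k. g k (X k x)) \<longlonglongrightarrow> 0"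
      by (intro AE_cesaro_mean_tendsto_0) (auto simp: g_def)
    then show ?thesis by (simp add: g_def)
  qed
  then have "AE x in M. \<forall>j. cesaro_mean
      (\<lambda>k. if 1 / real (Suc j) \<le> norm (\<sigma> k *\<^sub>R X k x) then 1 else 0 :: real) \<longlonglongrightarrow> 0"
    unfolding AE_all_countable by simp
  then show ?thesis
    by eventually_elim (simp add: statistically_nullI_inverse_Suc)
qed

theorem mainTheorem8:
  fixes \<mu> :: "complex measure" and a :: "nat \<Rightarrow> complex" and \<sigma> :: "nat \<Rightarrow> real"
    and M :: "'w measure" and X :: "nat \<Rightarrow> 'w \<Rightarrow> complex"
  assumes "prob_space \<mu>" and "sets \<mu> = sets borel"
    and "mu_distributed \<mu> a"
    and "\<And>n. n \<ge> 1 \<Longrightarrow> \<sigma> n \<ge> 0"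
    and "\<And>n. n \<ge> 1 \<Longrightarrow> \<sigma> (Suc n) \<le> \<sigma> n"
    and "\<sigma> \<longlonglongrightarrow> 0"
    and "prob_space M"
    and "\<And>i. i \<ge> 1 \<Longrightarrow> X i \<in> borel_measurable M"
    and "prob_space.indep_vars M (\<lambda>_. borel) X {1..}"
    and "\<And>i. i \<ge> 1 \<Longrightarrow> distr M borel (X i) = distr M borel (X 1)"
  shows "AE \<omega> in M. mu_distributed \<mu> (\<lambda>n. a n + of_real (\<sigma> n) * X n \<omega>)"
proof -
  interpret M: prob_space M by fact
  have "AE \<omega> in M. statistically_null (\<lambda>n. \<sigma> n *\<^sub>R X n \<omega>)"
    using assms(6,9,10) by (rule M.AE_statistically_null_scaled_iid)
  then show ?thesis
  proof eventually_elim
    case (elim \<omega>)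
    show ?case
      using mu_distributed_add[OF assms(3) elim] by (simp add: scaleR_conv_of_real)
  qed
qed

end
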